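(* Fix $A>0$, $\mu>0$, $a>0$ and put $\lambda:=2\mu/A$, $q:=a\mu$. Fix $\epsilon\in(0,\pi/2)$ and, for $R>0$, let $\mu_R$ be the horizontal path $\varphi=\alpha+iR$, $-\pi/2+\epsilon\le\alpha\le\pi/2-\epsilon$, in the complex $\varphi$-plane. For $t>0$ and $0<x,y<a$ define $$k_{\mathrm{hfa}}(t,x,y):=\lim_{R\to\infty}\frac{1}{2\pi i}\int_{\mu_R}K_{t,x,y}(\varphi)\,d\varphi ,$$ where $K_{t,x,y}$ is the function defined in the context. Then, if $t>2a$, the limit exists and $k_{\mathrm{hfa}}(t,x,y)=0$ for all $0<x,y<a$.
   Context: This concerns the wave equation $\partial_t^2\phi-\partial_x^2\phi+V(x)\phi=0$ with the toy potential $V(x)=A\delta(x)+\mu^2\theta(x-a)$ ($\delta$ the Dirac delta, $\theta$ the Heaviside function). Complex frequencies $s$ are parametrized by a complex angle $\varphi$ via $s=i\mu\sin\varphi$, $\varphi$ in the strip $Q=\{\varphi\in\mathbb{C}:-\pi/2<\mathrm{Re}\,\varphi<\pi/2\}$. Define $$F(\lambda,\varphi):=1+i\lambda\sin\varphi-e^{-2i\varphi-2qi\sin\varphi}.$$ With $\tau:=\mu t$, $\xi:=\mu(x+y)$, $\eta:=\mu|x-y|$, define $$K_{t,x,y}(\varphi):=\frac{(1+i\lambda\sin\varphi)e^{i\sin\varphi(\tau-\eta)}+e^{i\sin\varphi(\tau+\eta-2q)-2i\varphi}-(1+i\lambda\sin\varphi)e^{i\sin\varphi(\tau+\xi-2q)-2i\varphi}-e^{i\sin\varphi(\tau-\xi)}}{2\tan(\varphi)\,F(\lambda,\varphi)}.$$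 (This is $e^{st}G(s,x,y)\,ds$ written in the variable $\varphi$, where $G$ is the Green's function of the mode equation $s^2f-f''+Vf=0$ inside the well $0<x,y<a$; $k_{\mathrm{hfa}}$ is the contribution of the high-frequency arc to the solution kernel.) *)

theory Defs
  imports "HOL-Analysis.Analysis"
begin

definition Fres :: "real \<Rightarrow> real \<Rightarrow> complex \<Rightarrow> complex" where
  "Fres lam q \<phi> = 1 + \<i> * of_real lam * sin \<phi> - exp (- 2 * \<i> * \<phi> - 2 * of_real q * \<i> * sin \<phi>)"

definition Kint :: "real \<Rightarrow> real \<Rightarrow> real \<Rightarrow> real \<Rightarrow> real \<Rightarrow> real \<Rightarrow> complex \<Rightarrow> complex" where
  "Kint A \<mu> a t x y \<phi> =
    (let lam = 2 * \<mu> / A; q = a * \<mu>; \<tau> = \<mu> * t; \<xi> = \<mu> * (x + y); \<eta> = \<mu> * \<bar>x - y\<bar>;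
         s = sin \<phi>; L = 1 + \<i> * of_real lam * s
     in (L * exp (\<i> * s * of_real (\<tau> - \<eta>))
         + exp (\<i> * s * of_real (\<tau> + \<eta> - 2 * q) - 2 * \<i> * \<phi>)
         - L * exp (\<i> * s * of_real (\<tau> + \<xi> - 2 * q) - 2 * \<i> * \<phi>)
         - exp (\<i> * s * of_real (\<tau> - \<xi>)))
        / (2 * tan \<phi> * Fres lam q \<phi>))"

text \<open>The integral over the horizontal path phi = alpha + i R,
  -pi/2+eps <= alpha <= pi/2-eps, times 1/(2 pi i); d phi = d alpha.\<close>
definition arc_integral :: "real \<Rightarrow> real \<Rightarrow> real \<Rightarrow> real \<Rightarrow> real \<Rightarrow> real \<Rightarrow> real \<Rightarrow> real \<Rightarrow> complex" where
  "arc_integral A \<mu> a \<epsilon> t x y R =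
     integral {-pi/2 + \<epsilon> .. pi/2 - \<epsilon>} (\<lambda>\<alpha>. Kint A \<mu> a t x y (Complex \<alpha> R)) / (2 * pi * \<i>)"

end

theory Submission
  imports Defs "HOL-Real_Asymp.Real_Asymp"
begin

text \<open>On the horizontal line \<open>\<phi> = \<alpha> + i R\<close> one has \<open>D := Im (sin \<phi>) = cos \<alpha> sinh R\<close>, which is
  of order \<open>exp R\<close> uniformly for \<open>\<alpha>\<close> bounded away from \<open>\<plusminus>\<pi>/2\<close>. For large \<open>R\<close> the exponential
  term of \<open>F\<close> dominates, so \<open>|F| \<ge> exp (2R + 2qD) / 2\<close>, while each of the four terms of the
  numerator is at most \<open>(1 + |1 + i\<lambda> sin \<phi>|) exp (2R - (\<tau> - 4q) D)\<close> because \<open>0 < x, y < a\<close>.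
  With \<open>|tan \<phi>| \<ge> D exp (-R)\<close> the kernel is \<open>O (exp (2R) exp (-(\<tau> - 2q) D) / D)\<close>, and
  \<open>\<tau> - 2q = \<mu> (t - 2a) > 0\<close> makes this decay doubly exponentially, uniformly on the path of
  bounded length.\<close>

definition kernel_numerator :: "real \<Rightarrow> real \<Rightarrow> real \<Rightarrow> real \<Rightarrow> real \<Rightarrow> complex \<Rightarrow> complex" where
  "kernel_numerator lam q \<tau> \<eta> \<xi> \<phi> =
    (let L = 1 + \<i> * of_real lam * sin \<phi>
     in L * exp (\<i> * sin \<phi> * of_real (\<tau> - \<eta>))
        + exp (\<i> * sin \<phi> * of_real (\<tau> + \<eta> - 2 * q) - 2 * \<i> * \<phi>)
        - L * exp (\<i> * sin \<phi> * of_real (\<tau> + \<xi> - 2 * q) - 2 * \<i> * \<phi>)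
        - exp (\<i> * sin \<phi> * of_real (\<tau> - \<xi>)))"

definition kernel :: "real \<Rightarrow> real \<Rightarrow> real \<Rightarrow> real \<Rightarrow> real \<Rightarrow> complex \<Rightarrow> complex" where
  "kernel lam q \<tau> \<eta> \<xi> \<phi> = kernel_numerator lam q \<tau> \<eta> \<xi> \<phi> / (2 * tan \<phi> * Fres lam q \<phi>)"

lemma Kint_eq_kernel:
  "Kint A \<mu> a t x y = kernel (2 * \<mu> / A) (a * \<mu>) (\<mu> * t) (\<mu> * \<bar>x - y\<bar>) (\<mu> * (x + y))"
  by (simp add: fun_eq_iff Kint_def kernel_def kernel_numerator_def Let_def)

lemma norm_exp_i_sin_mult:
  "norm (exp (\<i> * sin \<phi> * of_real r)) = exp (- (r * Im (sin \<phi>)))"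
  by (simp add: norm_exp_eq_Re)

lemma norm_exp_i_sin_mult_diff:
  "norm (exp (\<i> * sin \<phi> * of_real r - 2 * \<i> * \<phi>)) = exp (2 * Im \<phi> - r * Im (sin \<phi>))"
  by (simp add: norm_exp_eq_Re)

lemma norm_kernel_numerator_le:
  assumes "0 \<le> Im \<phi>" "0 \<le> Im (sin \<phi>)" "0 \<le> \<eta>" "\<eta> \<le> 4 * q" "0 \<le> \<xi>" "\<xi> \<le> 4 * q"
  shows "norm (kernel_numerator lam q \<tau> \<eta> \<xi> \<phi>)
           \<le> 2 * (norm (1 + \<i> * of_real lam * sin \<phi>) + 1) * exp (2 * Im \<phi> - (\<tau> - 4 * q) * Im (sin \<phi>))"
proof -
  define L where "L = 1 + \<i> * of_real lam * sin \<phi>"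
  define M where "M = exp (2 * Im \<phi> - (\<tau> - 4 * q) * Im (sin \<phi>))"
  have plain: "norm (exp (\<i> * sin \<phi> * of_real r)) \<le> M" if "\<tau> - 4 * q \<le> r" for r
  proof -
    have "(\<tau> - 4 * q) * Im (sin \<phi>) \<le> r * Im (sin \<phi>)"
      using that assms(2) by (rule mult_right_mono)
    then show ?thesis
      unfolding norm_exp_i_sin_mult M_def using assms(1) by simp
  qed
  have shifted: "norm (exp (\<i> * sin \<phi> * of_real r - 2 * \<i> * \<phi>)) \<le> M" if "\<tau> - 4 * q \<le> r" for r
  proof -
    have "(\<tau> - 4 * q) * Im (sin \<phi>) \<le> r * Im (sin \<phi>)"
      using that assms(2) by (rule mult_right_mono)
    then show ?thesis
      unfolding norm_exp_i_sin_mult_diff M_def by simp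
  qed
  have "norm (kernel_numerator lam q \<tau> \<eta> \<xi> \<phi>)
      \<le> norm L * norm (exp (\<i> * sin \<phi> * of_real (\<tau> - \<eta>)))
       + norm (exp (\<i> * sin \<phi> * of_real (\<tau> + \<eta> - 2 * q) - 2 * \<i> * \<phi>))
       + norm L * norm (exp (\<i> * sin \<phi> * of_real (\<tau> + \<xi> - 2 * q) - 2 * \<i> * \<phi>))
       + norm (exp (\<i> * sin \<phi> * of_real (\<tau> - \<xi>)))"
    unfolding kernel_numerator_def Let_def L_def[symmetric] norm_mult[symmetric]
    by (smt (verit) norm_triangle_ineq norm_triangle_ineq4)
  also have "\<dots> \<le> norm L * M + M + norm L * M + M"
    using assms by (intro add_mono mult_left_mono plain shifted) auto
  finally show ?thesis
    unfolding L_def M_def by (simp add: algebra_simps)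
qed

lemma norm_Fres_ge:
  assumes "2 * norm (1 + \<i> * of_real lam * sin \<phi>) \<le> exp (2 * Im \<phi> + 2 * q * Im (sin \<phi>))"
  shows "exp (2 * Im \<phi> + 2 * q * Im (sin \<phi>)) / 2 \<le> norm (Fres lam q \<phi>)"
proof -
  have "norm (exp (- 2 * \<i> * \<phi> - 2 * of_real q * \<i> * sin \<phi>)) = exp (2 * Im \<phi> + 2 * q * Im (sin \<phi>))"
    by (simp add: norm_exp_eq_Re)
  then show ?thesis
    using assms norm_triangle_ineq3[of "exp (- 2 * \<i> * \<phi> - 2 * of_real q * \<i> * sin \<phi>)"
        "1 + \<i> * of_real lam * sin \<phi>"]
    unfolding Fres_def by (simp add: norm_minus_commute)
qed

lemma norm_tan_ge:
  assumes "cos \<phi> \<noteq> 0" "0 \<le> Im (sin \<phi>)"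
  shows "Im (sin \<phi>) / exp \<bar>Im \<phi>\<bar> \<le> norm (tan \<phi>)"
proof -
  have "norm (cos \<phi>) \<le> exp \<bar>Im \<phi>\<bar>"
    using cmod_cos_le_exp[of 1 \<phi>] by simp
  moreover have "Im (sin \<phi>) \<le> norm (sin \<phi>)"
    using abs_Im_le_cmod[of "sin \<phi>"] by linarith
  ultimately have "Im (sin \<phi>) / exp \<bar>Im \<phi>\<bar> \<le> norm (sin \<phi>) / norm (cos \<phi>)"
    using assms by (intro frac_le) auto
  then show ?thesis
    by (simp add: tan_def norm_divide)
qed

lemma norm_kernel_le:
  assumes "0 \<le> Im \<phi>" "0 < Im (sin \<phi>)" "cos \<phi> \<noteq> 0"
    and "0 \<le> \<eta>" "\<eta> \<le> 4 * q" "0 \<le> \<xi>" "\<xi> \<le> 4 * q"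
    and dominant: "2 * norm (1 + \<i> * of_real lam * sin \<phi>) \<le> exp (2 * Im \<phi> + 2 * q * Im (sin \<phi>))"
  shows "norm (kernel lam q \<tau> \<eta> \<xi> \<phi>)
           \<le> 2 * (norm (1 + \<i> * of_real lam * sin \<phi>) + 1) * exp (Im \<phi>)
             * exp (- ((\<tau> - 2 * q) * Im (sin \<phi>))) / Im (sin \<phi>)"
proof -
  define D where "D = Im (sin \<phi>)"
  define n where "n = norm (1 + \<i> * of_real lam * sin \<phi>)"
  have D: "D > 0" using assms(2) by (simp add: D_def)
  have "norm (kernel lam q \<tau> \<eta> \<xi> \<phi>)
      = norm (kernel_numerator lam q \<tau> \<eta> \<xi> \<phi>) / (2 * norm (tan \<phi>) * norm (Fres lam q \<phi>))"
    by (simp add: kernel_def norm_divide norm_mult)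
  also have "\<dots> \<le> (2 * (n + 1) * exp (2 * Im \<phi> - (\<tau> - 4 * q) * D))
                  / (2 * (D / exp (Im \<phi>)) * (exp (2 * Im \<phi> + 2 * q * D) / 2))"
    using norm_kernel_numerator_le[of \<phi> \<eta> q \<xi> lam \<tau>] norm_tan_ge[of \<phi>]
      norm_Fres_ge[OF dominant] assms D
    unfolding D_def n_def by (intro frac_le mult_mono) auto
  also have "\<dots> = 2 * (n + 1) * exp (Im \<phi>) * exp (- ((\<tau> - 2 * q) * D)) / D"
    using D by (simp add: field_simps flip: exp_add exp_diff)
  finally show ?thesis
    unfolding D_def n_def .
qed

lemma isCont_kernel:
  assumes "sin \<phi> \<noteq> 0" "cos \<phi> \<noteq> 0" "Fres lam q \<phi> \<noteq> 0"
  shows "isCont (kernel lam q \<tau> \<eta> \<xi>) \<phi>"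
  using assms unfolding kernel_def kernel_numerator_def Fres_def tan_def Let_def
  by (intro continuous_intros) auto

lemma Im_sin_horizontal_ge:
  assumes "0 \<le> R" "c \<le> cos \<alpha>"
  shows "c * sinh R \<le> Im (sin (Complex \<alpha> R))"
  using assms by (simp add: Im_sin sinh_def mult_right_mono)

lemma cos_horizontal_nonzero:
  assumes "0 < cos \<alpha>"
  shows "cos (Complex \<alpha> R) \<noteq> 0"
proof -
  have "0 < Re (cos (Complex \<alpha> R))"
    using assms by (simp add: Re_cos add_pos_pos)
  then show ?thesis by auto
qed

definition horizontal_bound :: "real \<Rightarrow> real \<Rightarrow> real \<Rightarrow> real \<Rightarrow> real" where
  "horizontal_bound lam k c R = 2 * (2 + lam * exp R) * exp R * exp (- (k * c * sinh R)) / (c * sinh R)"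

lemma kernel_horizontal_estimate:
  assumes "0 \<le> lam" "0 \<le> q" "2 * q \<le> \<tau>"
    and "0 \<le> \<eta>" "\<eta> \<le> 4 * q" "0 \<le> \<xi>" "\<xi> \<le> 4 * q"
    and "0 < R" "0 < c" "c \<le> cos \<alpha>"
    and large: "2 * (1 + lam * exp R) \<le> exp (2 * R)"
  shows "isCont (kernel lam q \<tau> \<eta> \<xi>) (Complex \<alpha> R)"
    and "norm (kernel lam q \<tau> \<eta> \<xi> (Complex \<alpha> R)) \<le> horizontal_bound lam (\<tau> - 2 * q) c R"
proof -
  define \<phi> where "\<phi> = Complex \<alpha> R"
  define D where "D = Im (sin \<phi>)"
  have cD: "c * sinh R \<le> D"
    unfolding D_def \<phi>_def using assms by (intro Im_sin_horizontal_ge) auto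
  have cs: "0 < c * sinh R" using assms by simp
  have cos: "cos \<phi> \<noteq> 0"
    unfolding \<phi>_def using assms by (intro cos_horizontal_nonzero) auto
  have D: "0 < D"
    using cD cs by linarith
  then have sin: "sin \<phi> \<noteq> 0"
    by (auto simp: D_def)
  have nL: "norm (1 + \<i> * of_real lam * sin \<phi>) \<le> 1 + lam * exp R"
  proof -
    have "norm (sin \<phi>) \<le> exp R"
      using cmod_sin_le_exp[of 1 \<phi>] assms by (simp add: \<phi>_def)
    then have "norm (\<i> * of_real lam * sin \<phi>) \<le> lam * exp R"
      using assms by (simp add: norm_mult mult_left_mono)
    then show ?thesis
      by (smt (verit) norm_one norm_triangle_ineq)
  qed
  have dominant: "2 * norm (1 + \<i> * of_real lam * sin \<phi>) \<le> exp (2 * Im \<phi> + 2 * q * D)"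
  proof -
    have "0 \<le> q * D"
      using assms(2) cD cs by simp
    then have "exp (2 * R) \<le> exp (2 * Im \<phi> + 2 * q * D)"
      by (simp add: \<phi>_def mult.commute)
    then show ?thesis
      using nL large by (smt (verit))
  qed
  have "0 < norm (Fres lam q \<phi>)"
    using norm_Fres_ge[OF dominant[unfolded D_def]] by (rule less_le_trans[rotated]) simp
  then show "isCont (kernel lam q \<tau> \<eta> \<xi>) (Complex \<alpha> R)"
    using isCont_kernel[OF sin cos] by (simp add: \<phi>_def)
  have "norm (kernel lam q \<tau> \<eta> \<xi> \<phi>)
      \<le> 2 * (norm (1 + \<i> * of_real lam * sin \<phi>) + 1) * exp R * exp (- ((\<tau> - 2 * q) * D)) / D"
    using norm_kernel_le[OF _ D[unfolded D_def] cos, of \<eta> q \<xi> lam \<tau>] dominant assms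
    unfolding D_def by (simp add: \<phi>_def)
  also have "\<dots> \<le> 2 * (2 + lam * exp R) * exp R * exp (- ((\<tau> - 2 * q) * (c * sinh R))) / (c * sinh R)"
    using nL cD cs assms by (intro frac_le mult_mono) (auto simp: mult_left_mono)
  finally show "norm (kernel lam q \<tau> \<eta> \<xi> (Complex \<alpha> R)) \<le> horizontal_bound lam (\<tau> - 2 * q) c R"
    by (simp add: horizontal_bound_def \<phi>_def mult.assoc)
qed

lemma horizontal_bound_tendsto_0:
  assumes "0 < k" "0 < c"
  shows "(horizontal_bound lam k c \<longlongrightarrow> 0) at_top"
  unfolding horizontal_bound_def using assms by real_asymp

lemma sin_le_cos_within:
  assumes "\<alpha> \<in> {-pi/2 + \<epsilon> .. pi/2 - \<epsilon>}" "0 \<le> \<epsilon>"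
  shows "sin \<epsilon> \<le> cos \<alpha>"
proof -
  have "cos (pi/2 - \<epsilon>) \<le> cos \<bar>\<alpha>\<bar>"
    using assms by (intro cos_monotone_0_pi_le) auto
  then show ?thesis by (simp add: cos_diff)
qed

lemma eventually_large_exp: "\<forall>\<^sub>F R in at_top. 0 < R \<and> 2 * (1 + lam * exp R) \<le> exp (2 * R :: real)"
  by (intro eventually_conj) real_asymp+

lemma eventually_kernel_arc_estimate:
  assumes "0 \<le> lam" "0 \<le> q" "2 * q \<le> \<tau>"
    and "0 \<le> \<eta>" "\<eta> \<le> 4 * q" "0 \<le> \<xi>" "\<xi> \<le> 4 * q"
    and "0 < \<epsilon>" "\<epsilon> < pi / 2"
  shows "\<forall>\<^sub>F R in at_top.
           continuous_on {-pi/2 + \<epsilon> .. pi/2 - \<epsilon>} (\<lambda>\<alpha>. kernel lam q \<tau> \<eta> \<xi> (Complex \<alpha> R))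
         \<and> (\<forall>\<alpha>\<in>{-pi/2 + \<epsilon> .. pi/2 - \<epsilon>}.
              norm (kernel lam q \<tau> \<eta> \<xi> (Complex \<alpha> R)) \<le> horizontal_bound lam (\<tau> - 2 * q) (sin \<epsilon>) R)"
  using eventually_large_exp[of lam]
proof eventually_elim
  case (elim R)
  have sin_\<epsilon>: "0 < sin \<epsilon>"
    using assms by (intro sin_gt_zero) auto
  note est = kernel_horizontal_estimate[OF assms(1-7) conjunct1[OF elim] sin_\<epsilon>
      sin_le_cos_within conjunct2[OF elim]]
  have path: "isCont (\<lambda>\<alpha>. Complex \<alpha> R) \<alpha>" for \<alpha>
    unfolding Complex_eq by (intro continuous_intros)
  show ?case
  proof (intro conjI continuous_at_imp_continuous_on ballI)
    fix \<alpha> assume "\<alpha> \<in> {-pi/2 + \<epsilon> .. pi/2 - \<epsilon>}"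
    with est[of \<alpha>] assms
    show "isCont (\<lambda>\<alpha>. kernel lam q \<tau> \<eta> \<xi> (Complex \<alpha> R)) \<alpha>"
      and "norm (kernel lam q \<tau> \<eta> \<xi> (Complex \<alpha> R)) \<le> horizontal_bound lam (\<tau> - 2 * q) (sin \<epsilon>) R"
      by (simp_all add: isCont_o2[OF path])
  qed
qed

lemma integral_tendsto_0_uniform_bound:
  fixes f :: "'b \<Rightarrow> real \<Rightarrow> 'a::banach"
  assumes "a \<le> b"
    and "\<forall>\<^sub>F R in F. continuous_on {a..b} (f R) \<and> (\<forall>x\<in>{a..b}. norm (f R x) \<le> g R)"
    and "(g \<longlongrightarrow> 0) F"
  shows "(\<forall>\<^sub>F R in F. f R integrable_on {a..b}) \<and> ((\<lambda>R. integral {a..b} (f R)) \<longlongrightarrow> 0) F"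
proof
  show "\<forall>\<^sub>F R in F. f R integrable_on {a..b}"
    using assms(2) by eventually_elim (simp add: integrable_continuous_real)
  have "((\<lambda>R. g R * (b - a)) \<longlongrightarrow> 0) F"
    using tendsto_mult_left_zero[OF assms(3)] .
  moreover have "\<forall>\<^sub>F R in F. norm (integral {a..b} (f R)) \<le> g R * (b - a)"
    using assms(2)
  proof eventually_elim
    case (elim R)
    then show ?case
      using integral_bound[OF assms(1)] by blast
  qed
  ultimately show "((\<lambda>R. integral {a..b} (f R)) \<longlongrightarrow> 0) F"
    by (rule Lim_null_comparison[rotated])
qed

theorem mainTheorem1:
  fixes A \<mu> a \<epsilon> t x y :: real
  assumes "A > 0" "\<mu> > 0" "a > 0"
    and "0 < \<epsilon>" "\<epsilon> < pi / 2"
    and "t > 2 * a"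
    and "0 < x" "x < a" "0 < y" "y < a"
  shows "(\<forall>\<^sub>F R in at_top.
            (\<lambda>\<alpha>. Kint A \<mu> a t x y (Complex \<alpha> R)) integrable_on {-pi/2 + \<epsilon> .. pi/2 - \<epsilon>})
       \<and> ((\<lambda>R. arc_integral A \<mu> a \<epsilon> t x y R) \<longlongrightarrow> 0) at_top"
proof -
  define K where "K = kernel (2 * \<mu> / A) (a * \<mu>) (\<mu> * t) (\<mu> * \<bar>x - y\<bar>) (\<mu> * (x + y))"
  define g where "g = horizontal_bound (2 * \<mu> / A) (\<mu> * t - 2 * (a * \<mu>)) (sin \<epsilon>)"
  have dist: "\<bar>x - y\<bar> \<le> 4 * a" "x + y \<le> 4 * a"
    using assms by auto
  have params: "0 \<le> 2 * \<mu> / A" "0 \<le> a * \<mu>" "2 * (a * \<mu>) \<le> \<mu> * t"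
      "0 \<le> \<mu> * \<bar>x - y\<bar>" "\<mu> * \<bar>x - y\<bar> \<le> 4 * (a * \<mu>)"
      "0 \<le> \<mu> * (x + y)" "\<mu> * (x + y) \<le> 4 * (a * \<mu>)"
    using assms mult_left_mono[OF dist(1), of \<mu>] mult_left_mono[OF dist(2), of \<mu>]
    by (simp_all add: algebra_simps)
  have "\<forall>\<^sub>F R in at_top. continuous_on {-pi/2 + \<epsilon> .. pi/2 - \<epsilon>} (\<lambda>\<alpha>. K (Complex \<alpha> R))
          \<and> (\<forall>\<alpha>\<in>{-pi/2 + \<epsilon> .. pi/2 - \<epsilon>}. norm (K (Complex \<alpha> R)) \<le> g R)"
    unfolding K_def g_def using params assms by (intro eventually_kernel_arc_estimate) auto
  moreover have "(g \<longlongrightarrow> 0) at_top"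
    unfolding g_def using assms by (intro horizontal_bound_tendsto_0 sin_gt_zero) auto
  ultimately have "(\<forall>\<^sub>F R in at_top. (\<lambda>\<alpha>. K (Complex \<alpha> R)) integrable_on {-pi/2 + \<epsilon> .. pi/2 - \<epsilon>})
     \<and> ((\<lambda>R. integral {-pi/2 + \<epsilon> .. pi/2 - \<epsilon>} (\<lambda>\<alpha>. K (Complex \<alpha> R))) \<longlongrightarrow> 0) at_top"
    using assms by (intro integral_tendsto_0_uniform_bound) auto
  then show ?thesis
    unfolding arc_integral_def Kint_eq_kernel K_def[symmetric]
    using tendsto_divide_zero by blast
qed

end
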